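(* In the MDC-ADMM algorithm, the objective $S(\boldsymbol{\mu},\boldsymbol{\theta})$ converges in a finite number of steps; that is, there is an $m^*<\infty$ with $$S\left(\boldsymbol{\mu}^{(m)},\boldsymbol{\theta}^{(m)}\right)=S\left(\boldsymbol{\mu}^{(m^* )},\boldsymbol{\theta}^{(m^* )}\right)\quad\text{for all } m \ge m^*.$$ Moreover, $\left(\boldsymbol{\mu}^{(m^* )},\boldsymbol{\theta}^{(m^* )}\right)$ is a KKT point of the constrained problem of minimizing $S(\boldsymbol{\mu},\boldsymbol{\theta})$ subject to $\boldsymbol{\theta}_{ij}=\boldsymbol{\mu}_i-\boldsymbol{\mu}_j$, $1\le i<j\le n$.
   Context: Given observations $\mathbf{x}_1,\dots,\mathbf{x}_n\in\mathbb{R}^p$, with centroids $\boldsymbol{\mu}_i\in\mathbb{R}^p$, consider the problem $$\min_{\boldsymbol{\mu},\boldsymbol{\theta}} S(\boldsymbol{\mu},\boldsymbol{\theta})=\frac12\sum_{i=1}^n\|\mathbf{x}_i-\boldsymbol{\mu}_i\|_2^2+\lambda_1\sum_{i=1}^n\|\boldsymbol{\mu}_i\|_1+\lambda_2\sum_{i<j}\mathrm{TLP}(\|\boldsymbol{\theta}_{ij}\|_2;\tau)\quad\text{s.t. }\boldsymbol{\theta}_{ij}=\boldsymbol{\mu}_i-\boldsymbol{\mu}_j,\ 1\le i<j\le n,$$ where $\mathrm{TLP}(a,b)=\min(|a|,b)$ and $\lambda_1,\lambda_2,\tau>0$. Write $S=S_1-S_2$ with $S_1(\boldsymbol{\mu},\boldsymbol{\theta})=\frac12\sum_i\|\mathbf{x}_i-\boldsymbol{\mu}_i\|_2^2+\lambda_1\sum_i\|\boldsymbol{\mu}_i\|_1+\lambda_2\sum_{i<j}\|\boldsymbol{\theta}_{ij}\|_2$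 and $S_2(\boldsymbol{\theta})=\lambda_2\sum_{i<j}(\|\boldsymbol{\theta}_{ij}\|_2-\tau)_+$, both convex. MDC-ADMM (a difference-of-convex algorithm combined with ADMM) is: initialize $\hat{\boldsymbol{\mu}}_i^{(0)}=\mathbf{x}_i$, $\hat{\boldsymbol{\theta}}_{ij}^{(0)}=\mathbf{x}_i-\mathbf{x}_j$, dual variables $\hat{\mathbf{v}}_{ij}^{(0)}=\mathbf{0}$; at outer step $m$ replace $S$ by the convex upper approximation $$S^{(m+1)}(\boldsymbol{\mu},\boldsymbol{\theta})=\frac12\sum_i\|\mathbf{x}_i-\boldsymbol{\mu}_i\|_2^2+\lambda_1\sum_i\|\boldsymbol{\mu}_i\|_1+\lambda_2\sum_{i<j}\|\boldsymbol{\theta}_{ij}\|_2 I(\|\hat{\boldsymbol{\theta}}^{(m)}_{ij}\|_2<\tau)+\lambda_2\tau\sum_{i<j}I(\|\hat{\boldsymbol{\theta}}^{(m)}_{ij}\|_2\ge\tau),$$ minimize it subject to $\boldsymbol{\theta}_{ij}=\boldsymbol{\mu}_i-\boldsymbol{\mu}_j$ by ADMM (scaled augmented Lagrangian with penalty parameter $\rho>0$; $\boldsymbol{\mu}_i$-updates are LASSO problems solved by cyclic coordinate descent, $\boldsymbol{\theta}_{ij}$-updates by group soft-thresholding, and $\mathbf{v}_{ij}\leftarrow\mathbf{v}_{ij}+\boldsymbol{\theta}_{ij}-(\boldsymbol{\mu}_i-\boldsymbol{\mu}_j)$), run ADMM to convergence to get $(\hat{\boldsymbol{\mu}}^{(m+1)},\hat{\boldsymbol{\theta}}^{(m+1)})$,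 and repeat while $S$ strictly decreases. *)

theory Defs
  imports "HOL-Analysis.Analysis"
begin

text \<open>Observations x_1..x_n are indexed by i < n (0-based); centroids mu i, pairwise
  differences theta i j for i < j < n.  Vectors live in real^'p (p = CARD('p)).\<close>

definition l1norm :: "real^'p \<Rightarrow> real" where
  "l1norm v = (\<Sum>k\<in>UNIV. \<bar>v $ k\<bar>)"

definition TLP :: "real \<Rightarrow> real \<Rightarrow> real" where
  "TLP a b = min \<bar>a\<bar> b"

definition pairs :: "nat \<Rightarrow> (nat \<times> nat) set" where
  "pairs n = {(i, j). i < j \<and> j < n}"

definition S_obj :: "nat \<Rightarrow> (nat \<Rightarrow> real^'p) \<Rightarrow> real \<Rightarrow> real \<Rightarrow> real
    \<Rightarrow> (nat \<Rightarrow> real^'p) \<Rightarrow> (nat \<Rightarrow> nat \<Rightarrow> real^'p) \<Rightarrow> real" where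
  "S_obj n x lam1 lam2 tau mu th =
     (1/2) * (\<Sum>i<n. (norm (x i - mu i))\<^sup>2) + lam1 * (\<Sum>i<n. l1norm (mu i))
     + lam2 * (\<Sum>(i, j)\<in>pairs n. TLP (norm (th i j)) tau)"

definition S1 :: "nat \<Rightarrow> (nat \<Rightarrow> real^'p) \<Rightarrow> real \<Rightarrow> real
    \<Rightarrow> (nat \<Rightarrow> real^'p) \<Rightarrow> (nat \<Rightarrow> nat \<Rightarrow> real^'p) \<Rightarrow> real" where
  "S1 n x lam1 lam2 mu th =
     (1/2) * (\<Sum>i<n. (norm (x i - mu i))\<^sup>2) + lam1 * (\<Sum>i<n. l1norm (mu i))
     + lam2 * (\<Sum>(i, j)\<in>pairs n. norm (th i j))"

text \<open>Convex part S_2 (S = S_1 - S_2).\<close>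
definition S2 :: "nat \<Rightarrow> real \<Rightarrow> real \<Rightarrow> (nat \<Rightarrow> nat \<Rightarrow> real^'p) \<Rightarrow> real" where
  "S2 n lam2 tau th = lam2 * (\<Sum>(i, j)\<in>pairs n. max (norm (th i j) - tau) 0)"

definition feasible :: "nat \<Rightarrow> (nat \<Rightarrow> real^'p) \<Rightarrow> (nat \<Rightarrow> nat \<Rightarrow> real^'p) \<Rightarrow> bool" where
  "feasible n mu th \<longleftrightarrow> (\<forall>(i, j)\<in>pairs n. th i j = mu i - mu j)"

text \<open>The convex upper approximation S^(m+1), built from the previous iterate thhat.\<close>
definition S_surr :: "nat \<Rightarrow> (nat \<Rightarrow> real^'p) \<Rightarrow> real \<Rightarrow> real \<Rightarrow> real
    \<Rightarrow> (nat \<Rightarrow> nat \<Rightarrow> real^'p)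
    \<Rightarrow> (nat \<Rightarrow> real^'p) \<Rightarrow> (nat \<Rightarrow> nat \<Rightarrow> real^'p) \<Rightarrow> real" where
  "S_surr n x lam1 lam2 tau thhat mu th =
     (1/2) * (\<Sum>i<n. (norm (x i - mu i))\<^sup>2) + lam1 * (\<Sum>i<n. l1norm (mu i))
     + lam2 * (\<Sum>(i, j)\<in>pairs n. norm (th i j) * (if norm (thhat i j) < tau then 1 else 0))
     + lam2 * tau * (\<Sum>(i, j)\<in>pairs n. if norm (thhat i j) \<ge> tau then 1 else 0)"

text \<open>One outer MDC step: (mu', th') is the solution (the limit of ADMM) of the convex
  subproblem: minimize S^(m+1) subject to the linear constraints.\<close>
definition mdc_step :: "nat \<Rightarrow> (nat \<Rightarrow> real^'p) \<Rightarrow> real \<Rightarrow> real \<Rightarrow> real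
    \<Rightarrow> (nat \<Rightarrow> nat \<Rightarrow> real^'p)
    \<Rightarrow> (nat \<Rightarrow> real^'p) \<Rightarrow> (nat \<Rightarrow> nat \<Rightarrow> real^'p) \<Rightarrow> bool" where
  "mdc_step n x lam1 lam2 tau thhat mu' th' \<longleftrightarrow>
     feasible n mu' th' \<and>
     (\<forall>mu th. feasible n mu th \<longrightarrow>
        S_surr n x lam1 lam2 tau thhat mu' th' \<le> S_surr n x lam1 lam2 tau thhat mu th)"

text \<open>KKT point of min S = S_1 - S_2 s.t. theta_ij = mu_i - mu_j (DC-critical point):
  feasibility, and there are Lagrange multipliers y_ij and a subgradient g of the convex
  function S_2 at theta such that 0 lies in the subdifferential (in (mu,theta)) of
  S_1 - <g, .> + sum_ij <y_ij, theta_ij - (mu_i - mu_j)>, i.e. the point minimises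
  this convex function.\<close>
definition KKT_point :: "nat \<Rightarrow> (nat \<Rightarrow> real^'p) \<Rightarrow> real \<Rightarrow> real \<Rightarrow> real
    \<Rightarrow> (nat \<Rightarrow> real^'p) \<Rightarrow> (nat \<Rightarrow> nat \<Rightarrow> real^'p) \<Rightarrow> bool" where
  "KKT_point n x lam1 lam2 tau mu th \<longleftrightarrow>
     feasible n mu th \<and>
     (\<exists>(y :: nat \<Rightarrow> nat \<Rightarrow> real^'p) (g :: nat \<Rightarrow> nat \<Rightarrow> real^'p).
        (\<forall>th'. S2 n lam2 tau th' \<ge>
            S2 n lam2 tau th + (\<Sum>(i, j)\<in>pairs n. g i j \<bullet> (th' i j - th i j))) \<and>
        (\<forall>mu' th'. S1 n x lam1 lam2 mu' th'
            - (\<Sum>(i, j)\<in>pairs n. g i j \<bullet> (th' i j - th i j))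
            + (\<Sum>(i, j)\<in>pairs n. y i j \<bullet> (th' i j - (mu' i - mu' j)))
          \<ge> S1 n x lam1 lam2 mu th))"

end

theory Submission
  imports Defs "HOL-Library.Function_Algebras"
begin

(* Each outer step minimises a convex majorant of S that touches S at the current iterate, so
   S(m+1) <= V(m) <= S(m) for the optimal value V(m) of the m-th subproblem. The subproblem depends
   on the previous iterate only through the set of pairs with ||theta_ij|| < tau, hence V takes
   finitely many values; being nonincreasing it is eventually constant, and then so is S.
   From then on the iterate minimises its own majorant. Let g_ij be the gradient of
   lambda_2 ||theta_ij|| on the pairs with ||theta_ij|| >= tau and 0 elsewhere: g is a subgradient of
   S_2, and S_1 - <g, .> dominates the majorant up to a constant, with equality at the iterate. So the
   iterate minimises the convex function S_1 - <g, .> on the feasible affine subspace, and a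
   finite-valued convex function minimised under finitely many linear equality constraints admits
   Lagrange multipliers. *)

(* Makes the variables (mu, theta) of the problem a real vector space, so that convex_on applies. *)
instantiation "fun" :: (type, real_vector) real_vector
begin

definition scaleR_fun :: "real \<Rightarrow> ('a \<Rightarrow> 'b) \<Rightarrow> 'a \<Rightarrow> 'b"
  where "scaleR_fun r f = (\<lambda>x. r *\<^sub>R f x)"

instance
  by standard (simp_all add: scaleR_fun_def fun_eq_iff scaleR_add_right scaleR_add_left)

end

lemma scaleR_fun_apply [simp]: "(r *\<^sub>R f) x = r *\<^sub>R f x"
  by (simp add: scaleR_fun_def)

section \<open>Lagrange multipliers for convex functions under linear constraints\<close>

lemma convex_on_scaled_linear:
  fixes h :: "'a::real_vector \<Rightarrow> real"
  assumes "linear h" "convex S"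
  shows "convex_on S (\<lambda>x. c * h x)"
  using assms by (simp add: convex_on_def linear_add linear_cmul algebra_simps)

lemma convex_on_sum_fun:
  assumes "finite A" "convex S" "\<And>i. i \<in> A \<Longrightarrow> convex_on S (f i)"
  shows "convex_on S (\<lambda>x. \<Sum>i\<in>A. f i x)"
  using assms by (induction A rule: finite_induct) (auto simp: convex_on_const intro: convex_on_add)

lemma convex_on_compose_linear:
  assumes "linear h" "convex_on UNIV g"
  shows "convex_on UNIV (\<lambda>x. g (h x))"
  using assms by (simp add: convex_on_def linear_add linear_cmul)

lemma convex_on_norm: "convex_on UNIV (norm :: 'a::real_normed_vector \<Rightarrow> real)"
  using convex_on_dist[of UNIV "0 :: 'a"] by (simp add: dist_norm)

lemma convex_on_power2_norm_diff:
  fixes a :: "'a::real_normed_vector"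
  shows "convex_on UNIV (\<lambda>y. (norm (a - y))\<^sup>2)"
proof (rule convex_onI)
  fix t :: real and x y :: 'a
  assume t: "0 < t" "t < 1"
  have "a - ((1 - t) *\<^sub>R x + t *\<^sub>R y) = (1 - t) *\<^sub>R (a - x) + t *\<^sub>R (a - y)"
    by (simp add: algebra_simps)
  then have "norm (a - ((1 - t) *\<^sub>R x + t *\<^sub>R y)) \<le> (1 - t) * norm (a - x) + t * norm (a - y)"
    using convex_onD[OF convex_on_norm, of t "a - x" "a - y"] t by simp
  then have "(norm (a - ((1 - t) *\<^sub>R x + t *\<^sub>R y)))\<^sup>2 \<le> ((1 - t) * norm (a - x) + t * norm (a - y))\<^sup>2"
    by (simp add: power_mono)
  also have "\<dots> \<le> (1 - t) * (norm (a - x))\<^sup>2 + t * (norm (a - y))\<^sup>2"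
    using convex_onD[OF convex_power2, of t "norm (a - x)" "norm (a - y)"] t by simp
  finally show "(norm (a - ((1 - t) *\<^sub>R x + t *\<^sub>R y)))\<^sup>2 \<le> (1 - t) * (norm (a - x))\<^sup>2 + t * (norm (a - y))\<^sup>2" .
qed simp

lemma linear_vec_nth: "linear (\<lambda>v. v $ k)"
  by (rule linearI) simp_all

lemma convex_on_l1norm: "convex_on UNIV l1norm"
  unfolding l1norm_def real_norm_def [symmetric]
  by (intro convex_on_sum_fun convex_on_compose_linear[OF linear_vec_nth convex_on_norm]) simp_all

lemma constrained_min_slope_le:
  fixes f l :: "'a::real_vector \<Rightarrow> real"
  assumes "affine W" "convex_on W f" "linear l"
    and min: "\<And>p. p \<in> W \<Longrightarrow> l p = 0 \<Longrightarrow> f z \<le> f p"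
    and v: "v \<in> W" "l v > 0" and w: "w \<in> W" "l w < 0"
  shows "(f z - f v) / l v \<le> (f z - f w) / l w"
proof -
  define t where "t = l v / (l v - l w)"
  have t: "0 \<le> t" "t \<le> 1" "(1 - t) * (l v - l w) = - l w" "t * (l v - l w) = l v"
    using v w by (auto simp: t_def field_simps)
  define p where "p = (1 - t) *\<^sub>R v + t *\<^sub>R w"
  have "l p = (1 - t) * l v + t * l w"
    using \<open>linear l\<close> by (simp add: p_def linear_add linear_cmul)
  also have "\<dots> = 0"
    using v w by (simp add: t_def field_simps)
  finally have "f z \<le> f p"
    using \<open>affine W\<close> v w by (intro min) (simp_all add: p_def affine_alt)
  also have "\<dots> \<le> (1 - t) * f v + t * f w"
    using convex_onD[OF \<open>convex_on W f\<close>] t v w by (simp add: p_def)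
  finally have "0 \<le> (1 - t) * (f v - f z) + t * (f w - f z)"
    by (simp add: algebra_simps)
  then have "0 \<le> (l v - l w) * ((1 - t) * (f v - f z) + t * (f w - f z))"
    using v w by simp
  also have "\<dots> = ((1 - t) * (l v - l w)) * (f v - f z) + (t * (l v - l w)) * (f w - f z)"
    by (simp add: algebra_simps)
  also have "\<dots> = - l w * (f v - f z) + l v * (f w - f z)"
    by (simp only: t(3,4))
  finally show ?thesis
    using v w by (simp add: divide_simps) (simp add: algebra_simps)
qed

lemma affine_pos_iff_neg:
  fixes l :: "'a::real_vector \<Rightarrow> real"
  assumes "affine W" "linear l" "z \<in> W" "l z = 0"
  shows "(\<exists>v\<in>W. l v > 0) \<longleftrightarrow> (\<exists>v\<in>W. l v < 0)"
proof -
  define mirror where "mirror v = (1 - 2) *\<^sub>R v + 2 *\<^sub>R z" for v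
  have "mirror v \<in> W" "l (mirror v) = - l v" if "v \<in> W" for v
  proof -
    show "mirror v \<in> W"
      using \<open>affine W\<close> \<open>z \<in> W\<close> that unfolding affine_alt mirror_def by blast
    show "l (mirror v) = - l v"
      using \<open>linear l\<close> \<open>l z = 0\<close> unfolding mirror_def by (simp only: linear_add linear_cmul) simp
  qed
  then show ?thesis
    by (metis neg_0_less_iff_less neg_less_0_iff_less)
qed

lemma lagrange_multiplier_linear_constraint:
  fixes f l :: "'a::real_vector \<Rightarrow> real"
  assumes "affine W" "convex_on W f" "linear l" "z \<in> W" "l z = 0"
    and min: "\<And>v. v \<in> W \<Longrightarrow> l v = 0 \<Longrightarrow> f z \<le> f v"
  shows "\<exists>c. \<forall>v\<in>W. f z \<le> f v + c * l v"
proof -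
  txt \<open>Points on either side of the hyperplane have ordered slopes; any c between them works.\<close>
  define slope where "slope v = (f z - f v) / l v" for v
  define P where "P = {v\<in>W. l v > 0}"
  define N where "N = {v\<in>W. l v < 0}"
  have slope_le: "slope v \<le> slope w" if "v \<in> P" "w \<in> N" for v w
    using constrained_min_slope_le[OF assms(1-3) min] that by (simp add: slope_def P_def N_def)
  have P_iff_N: "P = {} \<longleftrightarrow> N = {}"
    using affine_pos_iff_neg[OF assms(1,3-5)] by (auto simp: P_def N_def)
  show ?thesis
  proof (cases "P = {}")
    case True
    then have "l v = 0" if "v \<in> W" for v
      using P_iff_N that by (force simp: P_def N_def)
    then show ?thesis using min by (intro exI[of _ 0]) auto
  next
    case False
    then obtain w0 where "w0 \<in> N" using P_iff_N by auto
    define c where "c = Sup (slope ` P)"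
    have "bdd_above (slope ` P)"
      using slope_le \<open>w0 \<in> N\<close> by (intro bdd_aboveI[of _ "slope w0"]) auto
    then have le_c: "slope v \<le> c" if "v \<in> P" for v
      unfolding c_def using that by (intro cSup_upper) auto
    have c_le: "c \<le> slope w" if "w \<in> N" for w
      unfolding c_def using False slope_le that by (intro cSup_least) auto
    have "f z \<le> f v + c * l v" if "v \<in> W" for v
    proof (cases "l v" "0 :: real" rule: linorder_cases)
      case less
      then show ?thesis using c_le[of v] that by (simp add: N_def slope_def divide_simps algebra_simps)
    next
      case equal
      then show ?thesis using min that by simp
    next
      case greater
      then show ?thesis using le_c[of v] that by (simp add: P_def slope_def divide_simps algebra_simps)
    qed
    then show ?thesis by blast
  qed
qed

lemma lagrange_multipliers_linear_constraints:
  fixes f :: "'a::real_vector \<Rightarrow> real" and L :: "'i \<Rightarrow> 'a \<Rightarrow> real"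
  assumes "finite I" "affine W" "convex_on W f" "\<And>i. i \<in> I \<Longrightarrow> linear (L i)" "z \<in> W"
    "\<And>i. i \<in> I \<Longrightarrow> L i z = 0"
    and "\<And>v. v \<in> W \<Longrightarrow> \<forall>i\<in>I. L i v = 0 \<Longrightarrow> f z \<le> f v"
  shows "\<exists>c. \<forall>v\<in>W. f z \<le> f v + (\<Sum>i\<in>I. c i * L i v)"
  using assms
proof (induction I arbitrary: W f rule: finite_induct)
  case empty
  then show ?case by simp
next
  case (insert a I)
  define W' where "W' = {v\<in>W. \<forall>i\<in>I. L i v = 0}"
  have "affine W'"
    using insert.prems(1,3) unfolding W'_def affine_alt by (simp add: linear_add linear_cmul)
  moreover have "convex_on W' f"
    using insert.prems(2) \<open>affine W'\<close> by (auto simp: W'_def affine_imp_convex intro: convex_on_subset)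
  ultimately obtain c0 where c0: "\<forall>v\<in>W'. f z \<le> f v + c0 * L a v"
    using lagrange_multiplier_linear_constraint[of W' f "L a" z] insert.prems
    by (auto simp: W'_def)
  have "convex_on W (\<lambda>v. f v + c0 * L a v)"
    using insert.prems by (intro convex_on_add convex_on_scaled_linear) (auto simp: affine_imp_convex)
  then obtain c where c: "\<forall>v\<in>W. f z \<le> f v + c0 * L a v + (\<Sum>i\<in>I. c i * L i v)"
    using insert.IH[of W "\<lambda>v. f v + c0 * L a v"] insert.prems c0 by (auto simp: W'_def)
  have "f z \<le> f v + (\<Sum>i\<in>insert a I. (c(a := c0)) i * L i v)" if "v \<in> W" for v
  proof -
    have "(\<Sum>i\<in>I. (c(a := c0)) i * L i v) = (\<Sum>i\<in>I. c i * L i v)"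
      using insert.hyps by (intro sum.cong) auto
    then show ?thesis
      using c that insert.hyps by (simp add: add.assoc)
  qed
  then show ?case by blast
qed

section \<open>The difference-of-convex structure and KKT points\<close>

lemma finite_pairs: "finite (pairs n)"
  by (rule finite_subset[of _ "{..<n} \<times> {..<n}"]) (auto simp: pairs_def)

type_synonym 'p mu_theta = "(nat \<Rightarrow> real^'p) \<times> (nat \<Rightarrow> nat \<Rightarrow> real^'p)"

lemma convex_on_S1:
  assumes "0 \<le> lam1" "0 \<le> lam2"
  shows "convex_on UNIV (\<lambda>v :: ('p::finite) mu_theta. S1 n x lam1 lam2 (fst v) (snd v))"
proof -
  have mu: "linear (\<lambda>v :: 'p mu_theta. fst v i)" and th: "linear (\<lambda>v :: 'p mu_theta. snd v i j)" for i j
    by (rule linearI; simp)+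
  have "convex_on UNIV (\<lambda>v :: 'p mu_theta. \<Sum>i<n. (norm (x i - fst v i))\<^sup>2)"
    by (intro convex_on_sum_fun convex_on_compose_linear[OF mu convex_on_power2_norm_diff]) simp_all
  moreover have "convex_on UNIV (\<lambda>v :: 'p mu_theta. \<Sum>i<n. l1norm (fst v i))"
    by (intro convex_on_sum_fun convex_on_compose_linear[OF mu convex_on_l1norm]) simp_all
  moreover have "convex_on UNIV (\<lambda>v :: 'p mu_theta. \<Sum>p\<in>pairs n. norm (snd v (fst p) (snd p)))"
    by (intro convex_on_sum_fun finite_pairs convex_on_compose_linear[OF th convex_on_norm]) simp
  ultimately show ?thesis
    unfolding S1_def split_def using assms by (intro convex_on_add convex_on_cmul) simp_all
qed

lemma convex_on_S1_minus_linear: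
  assumes "0 \<le> lam1" "0 \<le> lam2"
  shows "convex_on UNIV (\<lambda>v :: ('p::finite) mu_theta.
    S1 n x lam1 lam2 (fst v) (snd v) - (\<Sum>(i, j)\<in>pairs n. g i j \<bullet> (snd v i j - T i j)))"
proof -
  have "linear (\<lambda>v :: 'p mu_theta. \<Sum>(i, j)\<in>pairs n. g i j \<bullet> snd v i j)"
    by (rule linearI) (simp_all add: split_def inner_add_right sum.distrib sum_distrib_left)
  then have "convex_on UNIV (\<lambda>v :: 'p mu_theta. - 1 * (\<Sum>(i, j)\<in>pairs n. g i j \<bullet> snd v i j)
      + (\<Sum>(i, j)\<in>pairs n. g i j \<bullet> T i j))"
    by (intro convex_on_add convex_on_scaled_linear) (simp_all add: convex_on_const)
  moreover have "S1 n x lam1 lam2 (fst v) (snd v) - (\<Sum>(i, j)\<in>pairs n. g i j \<bullet> (snd v i j - T i j))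
      = S1 n x lam1 lam2 (fst v) (snd v) + (- 1 * (\<Sum>(i, j)\<in>pairs n. g i j \<bullet> snd v i j)
      + (\<Sum>(i, j)\<in>pairs n. g i j \<bullet> T i j))" for v :: "'p mu_theta"
    by (simp add: inner_diff_right split_def sum_subtractf)
  ultimately show ?thesis
    by (simp only:) (rule convex_on_add[OF convex_on_S1[OF assms]])
qed

lemma feasible_lagrange_multipliers:
  fixes f :: "('p::finite) mu_theta \<Rightarrow> real"
  assumes "convex_on UNIV f" "feasible n Mu T"
    and min: "\<And>mu th. feasible n mu th \<Longrightarrow> f (Mu, T) \<le> f (mu, th)"
  shows "\<exists>y. \<forall>mu th. f (Mu, T) \<le> f (mu, th) + (\<Sum>(i, j)\<in>pairs n. y i j \<bullet> (th i j - (mu i - mu j)))"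
proof -
  define L :: "(nat \<times> nat) \<times> 'p \<Rightarrow> 'p mu_theta \<Rightarrow> real"
    where "L a v = (snd v (fst (fst a)) (snd (fst a)) - (fst v (fst (fst a)) - fst v (snd (fst a)))) $ snd a"
    for a v
  have feasible_iff: "feasible n (fst v) (snd v) \<longleftrightarrow> (\<forall>a\<in>pairs n \<times> UNIV. L a v = 0)" for v
    by (auto simp: feasible_def L_def vec_eq_iff)
  have "\<exists>c. \<forall>v\<in>UNIV. f (Mu, T) \<le> f v + (\<Sum>a\<in>pairs n \<times> UNIV. c a * L a v)"
  proof (rule lagrange_multipliers_linear_constraints)
    show "finite (pairs n \<times> (UNIV :: 'p set))"
      by (simp add: finite_pairs)
    show "linear (L a)" for a
      by (rule linearI) (simp_all add: L_def algebra_simps)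
    show "L a (Mu, T) = 0" if "a \<in> pairs n \<times> UNIV" for a
      using feasible_iff[of "(Mu, T)"] \<open>feasible n Mu T\<close> that by auto
    show "f (Mu, T) \<le> f v" if "\<forall>a\<in>pairs n \<times> UNIV. L a v = 0" for v
      using min[of "fst v" "snd v"] feasible_iff[of v] that by simp
  qed (use \<open>convex_on UNIV f\<close> in simp_all)
  then obtain c where c: "\<forall>v. f (Mu, T) \<le> f v + (\<Sum>a\<in>pairs n \<times> UNIV. c a * L a v)"
    by blast
  define y where "y i j = (\<chi> k. c ((i, j), k))" for i j
  have "(\<Sum>(i, j)\<in>pairs n. y i j \<bullet> (th i j - (mu i - mu j)))
      = (\<Sum>p\<in>pairs n. \<Sum>k\<in>UNIV. c (p, k) * L (p, k) (mu, th))" for mu th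
    by (intro sum.cong) (auto simp: y_def L_def inner_vec_def)
  then show ?thesis
    using c by (intro exI[of _ y]) (simp add: sum.cartesian_product)
qed

definition hinge_subgrad :: "real \<Rightarrow> real \<Rightarrow> 'a::real_inner \<Rightarrow> 'a" where
  "hinge_subgrad lam tau v = (if norm v < tau then 0 else (lam / norm v) *\<^sub>R v)"

lemma norm_subgradient:
  fixes v t :: "'a::real_inner"
  assumes "v \<noteq> 0" "0 \<le> lam"
  shows "lam * norm v + ((lam / norm v) *\<^sub>R v) \<bullet> (t - v) \<le> lam * norm t"
proof -
  have "((lam / norm v) *\<^sub>R v) \<bullet> (t - v) = (lam / norm v) * (v \<bullet> t) - lam * norm v"
    using assms by (simp add: inner_diff_right dot_square_norm power2_eq_square)
  moreover have "(lam / norm v) * (v \<bullet> t) \<le> (lam / norm v) * (norm v * norm t)"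
    using assms by (intro mult_left_mono norm_cauchy_schwarz) simp
  ultimately show ?thesis
    using assms by simp
qed

lemma hinge_subgrad_le:
  fixes v t :: "'a::real_inner"
  assumes "0 \<le> lam" "0 < tau"
  shows "lam * max (norm v - tau) 0 + hinge_subgrad lam tau v \<bullet> (t - v)
    \<le> (if norm v < tau then 0 else lam * (norm t - tau))"
proof (cases "norm v < tau")
  case False
  then have "v \<noteq> 0" using assms by auto
  then show ?thesis
    using False norm_subgradient[of v lam t] assms by (simp add: hinge_subgrad_def algebra_simps)
qed (simp add: hinge_subgrad_def)

lemma S2_subgradient:
  assumes "0 \<le> lam2" "0 < tau"
  shows "S2 n lam2 tau T + (\<Sum>(i, j)\<in>pairs n. hinge_subgrad lam2 tau (T i j) \<bullet> (th i j - T i j))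
    \<le> S2 n lam2 tau th"
proof -
  have "lam2 * max (norm (T i j) - tau) 0 + hinge_subgrad lam2 tau (T i j) \<bullet> (th i j - T i j)
      \<le> lam2 * max (norm (th i j) - tau) 0" for i j
  proof -
    have "(if norm (T i j) < tau then 0 else lam2 * (norm (th i j) - tau)) \<le> lam2 * max (norm (th i j) - tau) 0"
      using assms by (simp add: mult_left_mono)
    then show ?thesis
      using hinge_subgrad_le[OF assms, of "T i j" "th i j"] by linarith
  qed
  then show ?thesis
    unfolding S2_def sum_distrib_left split_def sum.distrib [symmetric] by (intro sum_mono) simp
qed

lemma S_surr_self: "S_surr n x lam1 lam2 tau th mu th = S_obj n x lam1 lam2 tau mu th"
proof -
  have "TLP r tau = r * (if r < tau then 1 else 0) + tau * (if r \<ge> tau then 1 else 0)" if "0 \<le> r" for r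
    using that by (simp add: TLP_def)
  then show ?thesis
    by (simp add: S_obj_def S_surr_def split_def sum.distrib sum_distrib_left algebra_simps)
qed

lemma S_obj_eq_S1_minus_S2: "S_obj n x lam1 lam2 tau mu th = S1 n x lam1 lam2 mu th - S2 n lam2 tau th"
proof -
  have "(\<Sum>(i, j)\<in>pairs n. TLP (norm (th i j)) tau)
      = (\<Sum>(i, j)\<in>pairs n. norm (th i j)) - (\<Sum>(i, j)\<in>pairs n. max (norm (th i j) - tau) 0)"
    unfolding sum_subtractf [symmetric] by (intro sum.cong) (auto simp: TLP_def)
  then show ?thesis
    by (simp add: S_obj_def S1_def S2_def right_diff_distrib)
qed

lemma S_surr_le_S1_minus_linearization:
  assumes "0 \<le> lam2" "0 < tau"
  shows "S_surr n x lam1 lam2 tau T mu th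
    \<le> S1 n x lam1 lam2 mu th
       - (S2 n lam2 tau T + (\<Sum>(i, j)\<in>pairs n. hinge_subgrad lam2 tau (T i j) \<bullet> (th i j - T i j)))"
proof -
  have "S1 n x lam1 lam2 mu th - S_surr n x lam1 lam2 tau T mu th
      = (\<Sum>(i, j)\<in>pairs n. if norm (T i j) < tau then 0 else lam2 * (norm (th i j) - tau))"
    by (simp add: S1_def S_surr_def split_def sum_distrib_left sum_subtractf [symmetric]
        if_distrib algebra_simps cong: if_cong)
  moreover have "S2 n lam2 tau T + (\<Sum>(i, j)\<in>pairs n. hinge_subgrad lam2 tau (T i j) \<bullet> (th i j - T i j))
      \<le> (\<Sum>(i, j)\<in>pairs n. if norm (T i j) < tau then 0 else lam2 * (norm (th i j) - tau))"
    unfolding S2_def sum_distrib_left split_def sum.distrib [symmetric]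
    by (intro sum_mono hinge_subgrad_le[OF assms])
  ultimately show ?thesis
    by linarith
qed

lemma KKT_point_if_minimizes_own_surrogate:
  fixes Mu :: "nat \<Rightarrow> real^'p" and T :: "nat \<Rightarrow> nat \<Rightarrow> real^'p"
  assumes "0 \<le> lam1" "0 \<le> lam2" "0 < tau" "feasible n Mu T"
    and min: "\<And>mu th. feasible n mu th \<Longrightarrow> S_surr n x lam1 lam2 tau T Mu T \<le> S_surr n x lam1 lam2 tau T mu th"
  shows "KKT_point n x lam1 lam2 tau Mu T"
proof -
  define g where "g i j = hinge_subgrad lam2 tau (T i j)" for i j
  define lin where "lin th = (\<Sum>(i, j)\<in>pairs n. g i j \<bullet> (th i j - T i j))" for th :: "nat \<Rightarrow> nat \<Rightarrow> real^'p"
  define f where "f v = S1 n x lam1 lam2 (fst v) (snd v) - lin (snd v)" for v :: "'p mu_theta"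
  have "convex_on UNIV f"
    unfolding f_def lin_def using assms(1,2) by (rule convex_on_S1_minus_linear)
  moreover have "f (Mu, T) \<le> f (mu, th)" if "feasible n mu th" for mu th
  proof -
    have "f (Mu, T) = S_surr n x lam1 lam2 tau T Mu T + S2 n lam2 tau T"
      by (simp add: f_def lin_def S_surr_self S_obj_eq_S1_minus_S2)
    also have "\<dots> \<le> S_surr n x lam1 lam2 tau T mu th + S2 n lam2 tau T"
      using min[OF that] by simp
    also have "\<dots> \<le> f (mu, th)"
      using S_surr_le_S1_minus_linearization[OF assms(2,3), of n x lam1 T mu th]
      by (simp add: f_def lin_def g_def)
    finally show ?thesis .
  qed
  ultimately obtain y where y:
    "\<forall>mu th. f (Mu, T) \<le> f (mu, th) + (\<Sum>(i, j)\<in>pairs n. y i j \<bullet> (th i j - (mu i - mu j)))"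
    using feasible_lagrange_multipliers[of f n Mu T] assms(4) by blast
  show ?thesis
    unfolding KKT_point_def
  proof (intro conjI exI allI)
    show "feasible n Mu T" by fact
    show "S2 n lam2 tau th \<ge> S2 n lam2 tau T + (\<Sum>(i, j)\<in>pairs n. g i j \<bullet> (th i j - T i j))" for th
      using S2_subgradient[OF assms(2,3)] by (simp add: g_def)
    show "S1 n x lam1 lam2 mu th - (\<Sum>(i, j)\<in>pairs n. g i j \<bullet> (th i j - T i j))
        + (\<Sum>(i, j)\<in>pairs n. y i j \<bullet> (th i j - (mu i - mu j))) \<ge> S1 n x lam1 lam2 Mu T" for mu th
      using y by (simp add: f_def lin_def)
  qed
qed

section \<open>Finite convergence of MDC-ADMM\<close>

definition fused_pairs :: "nat \<Rightarrow> real \<Rightarrow> (nat \<Rightarrow> nat \<Rightarrow> real^'p) \<Rightarrow> (nat \<times> nat) set" where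
  "fused_pairs n tau th = {(i, j) \<in> pairs n. norm (th i j) < tau}"

lemma S_obj_le_S_surr:
  assumes "0 \<le> lam2"
  shows "S_obj n x lam1 lam2 tau mu th \<le> S_surr n x lam1 lam2 tau thhat mu th"
proof -
  have "(\<Sum>(i, j)\<in>pairs n. TLP (norm (th i j)) tau)
     \<le> (\<Sum>(i, j)\<in>pairs n. norm (th i j) * (if norm (thhat i j) < tau then 1 else 0)
          + tau * (if norm (thhat i j) \<ge> tau then 1 else 0))"
    by (intro sum_mono) (auto simp: TLP_def)
  then show ?thesis
    using mult_left_mono[OF _ assms]
    by (fastforce simp: S_obj_def S_surr_def split_def sum.distrib sum_distrib_left algebra_simps)
qed

lemma S_surr_cong:
  assumes "fused_pairs n tau thhat = fused_pairs n tau thhat'"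
  shows "S_surr n x lam1 lam2 tau thhat mu th = S_surr n x lam1 lam2 tau thhat' mu th"
proof -
  have "norm (thhat i j) < tau \<longleftrightarrow> norm (thhat' i j) < tau" if "(i, j) \<in> pairs n" for i j
    using assms that unfolding fused_pairs_def set_eq_iff by blast
  then show ?thesis
    unfolding S_surr_def by (intro arg_cong2[where f = "(+)"] arg_cong2[where f = "(*)"] refl sum.cong)
      (auto simp: not_less [symmetric])
qed

lemma mdc_step_value_cong:
  assumes "mdc_step n x lam1 lam2 tau thhat mu th" "mdc_step n x lam1 lam2 tau thhat' mu' th'"
    and "fused_pairs n tau thhat = fused_pairs n tau thhat'"
  shows "S_surr n x lam1 lam2 tau thhat mu th = S_surr n x lam1 lam2 tau thhat' mu' th'"
  using assms S_surr_cong[OF assms(3)] unfolding mdc_step_def by (metis order_antisym)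

lemma finite_range_determined_by:
  assumes "finite (range A)" and "\<And>m m'. A m = A m' \<Longrightarrow> V m = V m'"
  shows "finite (range V)"
proof -
  have "V m = V (inv A (A m))" for m
    by (rule assms(2)) (simp add: f_inv_into_f)
  then have "V m \<in> (\<lambda>a. V (inv A a)) ` range A" for m
    by (rule image_eqI) (rule rangeI)
  then have "range V \<subseteq> (\<lambda>a. V (inv A a)) ` range A"
    by blast
  then show ?thesis
    using assms(1) finite_subset by blast
qed

lemma decseq_finite_range_eventually_const:
  fixes V :: "nat \<Rightarrow> 'a::linorder"
  assumes "decseq V" "finite (range V)"
  shows "\<exists>M. \<forall>m\<ge>M. V m = V M"
proof -
  obtain M where M: "V M = Min (range V)"
    using Min_in[OF assms(2)] by auto
  have "V m = V M" if "M \<le> m" for m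
    using decseqD[OF assms(1) that] Min_le[OF assms(2), of "V m"] M by simp
  then show ?thesis by blast
qed

lemma interlaced_eventually_const:
  fixes s V :: "nat \<Rightarrow> 'a::linorder"
  assumes "\<And>m. s (Suc m) \<le> V m" "\<And>m. V m \<le> s m" "finite (range V)"
  shows "\<exists>M. \<forall>m>M. s m = V M \<and> V m = V M"
proof -
  have "decseq V"
    using assms(1,2) by (intro decseq_SucI) (meson order_trans)
  then obtain M where M: "\<forall>m\<ge>M. V m = V M"
    using decseq_finite_range_eventually_const assms(3) by blast
  have "s m = V M \<and> V m = V M" if m: "M < m" for m
  proof -
    obtain k where k: "m = Suc k" "M \<le> k"
      using m by (cases m) simp_all
    have "V k = V M" "V m = V M"
      using M k(2) less_imp_le[OF m] by blast+
    then show ?thesis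
      using assms(1)[of k] assms(2)[of m] unfolding k(1) by simp
  qed
  then show ?thesis by blast
qed

lemma mdc_iterate_feasible:
  assumes "feasible n (mu 0) (th 0)" "\<forall>m. mdc_step n x lam1 lam2 tau (th m) (mu (Suc m)) (th (Suc m))"
  shows "feasible n (mu m) (th m)"
  using assms by (cases m) (simp_all add: mdc_step_def)

lemma mdc_step_le_S_obj:
  assumes "mdc_step n x lam1 lam2 tau th mu' th'" "feasible n mu th"
  shows "S_surr n x lam1 lam2 tau th mu' th' \<le> S_obj n x lam1 lam2 tau mu th"
  using assms unfolding mdc_step_def S_surr_self [symmetric] by blast

lemma mdc_values_finite_range:
  assumes "\<forall>m. mdc_step n x lam1 lam2 tau (th m) (mu (Suc m)) (th (Suc m))"
  shows "finite (range (\<lambda>m. S_surr n x lam1 lam2 tau (th m) (mu (Suc m)) (th (Suc m))))"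
proof (rule finite_range_determined_by)
  show "finite (range (\<lambda>m. fused_pairs n tau (th m)))"
    by (rule finite_subset[of _ "Pow (pairs n)"]) (auto simp: fused_pairs_def finite_pairs)
  show "S_surr n x lam1 lam2 tau (th m) (mu (Suc m)) (th (Suc m))
      = S_surr n x lam1 lam2 tau (th m') (mu (Suc m')) (th (Suc m'))"
    if "fused_pairs n tau (th m) = fused_pairs n tau (th m')" for m m'
    using assms that by (intro mdc_step_value_cong) simp_all
qed

lemma KKT_point_if_no_descent:
  assumes "0 \<le> lam1" "0 \<le> lam2" "0 < tau" "feasible n mu th" "mdc_step n x lam1 lam2 tau th mu' th'"
    and "S_obj n x lam1 lam2 tau mu th \<le> S_surr n x lam1 lam2 tau th mu' th'"
  shows "KKT_point n x lam1 lam2 tau mu th"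
proof (rule KKT_point_if_minimizes_own_surrogate)
  show "S_surr n x lam1 lam2 tau th mu th \<le> S_surr n x lam1 lam2 tau th a b" if "feasible n a b" for a b
    using assms(5,6) that by (simp add: S_surr_self mdc_step_def order_trans)
qed (use assms in simp_all)

theorem theorem2p1:
  fixes n :: nat and x :: "nat \<Rightarrow> real^'p" and lam1 lam2 tau :: real
    and mu :: "nat \<Rightarrow> nat \<Rightarrow> real^'p" and th :: "nat \<Rightarrow> nat \<Rightarrow> nat \<Rightarrow> real^'p"
  assumes "lam1 > 0" and "lam2 > 0" and "tau > 0"
    and "\<forall>i<n. mu 0 i = x i"
    and "\<forall>(i, j)\<in>pairs n. th 0 i j = x i - x j"
    and "\<forall>m. mdc_step n x lam1 lam2 tau (th m) (mu (Suc m)) (th (Suc m))"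
  shows "\<exists>ms. (\<forall>m\<ge>ms. S_obj n x lam1 lam2 tau (mu m) (th m)
                      = S_obj n x lam1 lam2 tau (mu ms) (th ms))
            \<and> KKT_point n x lam1 lam2 tau (mu ms) (th ms)"
proof -
  let ?S = "\<lambda>m. S_obj n x lam1 lam2 tau (mu m) (th m)"
  define V where "V m = S_surr n x lam1 lam2 tau (th m) (mu (Suc m)) (th (Suc m))" for m
  have "feasible n (mu 0) (th 0)"
    using assms(4,5) by (auto simp: feasible_def pairs_def)
  then have feasible: "feasible n (mu m) (th m)" for m
    using assms(6) by (rule mdc_iterate_feasible)
  have "?S (Suc m) \<le> V m" for m
    unfolding V_def using assms(2) by (intro S_obj_le_S_surr) simp
  moreover have "V m \<le> ?S m" for m
    unfolding V_def using assms(6) feasible by (intro mdc_step_le_S_obj) simp_all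
  moreover have "finite (range V)"
    unfolding V_def using assms(6) by (rule mdc_values_finite_range)
  ultimately obtain M where M: "\<forall>m>M. ?S m = V M \<and> V m = V M"
    using interlaced_eventually_const[of ?S V] by blast
  then have "?S (Suc M) \<le> V (Suc M)"
    by simp
  then have "KKT_point n x lam1 lam2 tau (mu (Suc M)) (th (Suc M))"
    unfolding V_def using assms(1-3,6) feasible
    by (intro KKT_point_if_no_descent[where mu' = "mu (Suc (Suc M))" and th' = "th (Suc (Suc M))"]) simp_all
  with M show ?thesis
    by (intro exI[of _ "Suc M"]) auto
qed

end
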